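(* Let $H_0=\{x\in\mathbb{R}^n:\sum x_i=0\}$, $\hat e_i=e_i-\frac1n\sum_k e_k$, $\Delta_n^0=\mathrm{Conv}\{\hat e_1,\dots,\hat e_n\}$. Let $A:H_0\to H_0$ be a non-singular linear map and $B=(A^* )^{-1}$, where $A^*$ is the adjoint with respect to the standard inner product restricted to $H_0$. Then $$\big(Root(A(\Delta_n^0))\big)^\circ=Zono(B(\Delta_n^0)),$$ polarity taken inside $H_0$.
   Context: For a simplex $\Delta_A=\mathrm{Conv}\{a_1,\dots,a_n\}$, the generalized root polytope is $Root(\Delta_A)=\mathrm{Conv}\{a_i-a_j:1\le i\ne j\le n\}$. For a non-degenerate simplex with vertices $a_1,\dots,a_m$ and barycenter $a$, $Zono(\Delta_A)=\sum_i[a,a_i]$ (Minkowski sum); so $Zono(B(\Delta_n^0))=\sum_i[0,B\hat e_i]$. For $K\subset H_0$ with $0$ in its relative interior, $K^\circ=\{y\in H_0:\langle y,x\rangle\le 1\ \forall x\in K\}$. *)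

theory Defs
  imports "HOL-Analysis.Analysis"
begin

definition H0 :: "(real^'n) set" where
  "H0 = {x. (\<Sum>i\<in>UNIV. x $ i) = 0}"

definition hat_e :: "'n::finite \<Rightarrow> real^'n" where
  "hat_e i = axis i 1 - (1 / real CARD('n)) *\<^sub>R (\<Sum>k\<in>UNIV. axis k 1)"

definition root_polytope :: "('i \<Rightarrow> 'a::real_vector) \<Rightarrow> 'a set" where
  "root_polytope a = convex hull {a i - a j | i j. i \<noteq> j}"

definition barycenter :: "('i::finite \<Rightarrow> 'a::real_vector) \<Rightarrow> 'a" where
  "barycenter a = (1 / real CARD('i)) *\<^sub>R (\<Sum>i\<in>UNIV. a i)"

text \<open>Zono = Minkowski sum of the segments [c, a_i], c the barycenter.\<close>
definition zono :: "('i::finite \<Rightarrow> 'a::real_vector) \<Rightarrow> 'a set" where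
  "zono a = {barycenter a + (\<Sum>i\<in>UNIV. t i *\<^sub>R (a i - barycenter a)) | t.
               \<forall>i. 0 \<le> t i \<and> t i \<le> 1}"

definition polar_H0 :: "(real^'n) set \<Rightarrow> (real^'n) set" where
  "polar_H0 K = {y \<in> H0. \<forall>x\<in>K. y \<bullet> x \<le> 1}"

end

theory Submission
  imports Defs
begin

text \<open>For y in H0 put z = A* y. Then y \<bullet> (A hat_e i - A hat_e j) = z_i - z_j, so y lies in
  the polar of the root polytope iff all coordinate differences of z are at most 1. Those z in H0
  are exactly the points \<Sum> t_k hat_e k with 0 \<le> t_k \<le> 1 (take t_k = z_k - min z), i.e. the
  zonotope of the standard simplex, whose barycenter is 0. Applying B = (A*)^-1 gives
  Zono(B \<Delta>).\<close>

lemma hat_e_component: "hat_e k $ i = (if k = i then 1 else 0) - 1 / real CARD('n)"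
  for k i :: "'n::finite"
  by (simp add: hat_e_def sum_component axis_def)

lemma sum_scaleR_hat_e_component:
  "(\<Sum>k\<in>UNIV. t k *\<^sub>R hat_e k) $ i = t i - (\<Sum>k\<in>UNIV. t k) / real CARD('n)"
  for i :: "'n::finite"
proof -
  have "(\<Sum>k\<in>UNIV. t k *\<^sub>R hat_e k) $ i
        = (\<Sum>k\<in>UNIV. (if k = i then t k else 0) - t k / real CARD('n))"
    by (simp add: sum_component hat_e_component) (intro sum.cong, auto simp: algebra_simps)
  then show ?thesis
    by (simp add: sum_subtractf sum_divide_distrib)
qed

lemma sum_scaleR_hat_e_in_H0: "(\<Sum>k\<in>UNIV. t k *\<^sub>R hat_e k) \<in> H0"
proof -
  have "(\<Sum>i\<in>UNIV. (\<Sum>k\<in>UNIV. t k *\<^sub>R hat_e k) $ i)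
        = (\<Sum>i\<in>(UNIV::'a set). t i - (\<Sum>k\<in>UNIV. t k) / real CARD('a))"
    by (simp only: sum_scaleR_hat_e_component)
  also have "\<dots> = 0"
    by (simp add: sum_subtractf)
  finally show ?thesis
    by (simp add: H0_def)
qed

lemma sum_hat_e_eq_0: "(\<Sum>k\<in>UNIV. hat_e k) = (0::real^'n::finite)"
proof -
  have "(\<Sum>k\<in>UNIV. hat_e k) = (\<Sum>k\<in>UNIV. (1::real) *\<^sub>R hat_e k)"
    by simp
  also have "\<dots> = 0"
    by (simp only: vec_eq_iff sum_scaleR_hat_e_component) simp
  finally show ?thesis .
qed

lemma inner_hat_e_diff: "w \<bullet> (hat_e i - hat_e j) = w $ i - w $ j"
  by (simp add: hat_e_def inner_diff_right inner_axis)

lemma hat_e_diff_in_H0: "hat_e i - hat_e j \<in> H0"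
  using sum_scaleR_hat_e_component[of "\<lambda>k. if k = i then 1 else 0"]
        sum_scaleR_hat_e_component[of "\<lambda>k. if k = j then 1 else 0"]
  by (simp add: H0_def sum_subtractf hat_e_component)

lemma hat_e_cube_eq:
  "{\<Sum>k\<in>UNIV. t k *\<^sub>R hat_e k | t. \<forall>k. 0 \<le> t k \<and> t k \<le> 1}
   = {z \<in> H0. \<forall>i j. z $ i - z $ j \<le> (1::real)}"
proof (intro set_eqI iffI)
  fix z :: "real^'n"
  assume "z \<in> {\<Sum>k\<in>UNIV. t k *\<^sub>R hat_e k | t. \<forall>k. 0 \<le> t k \<and> t k \<le> 1}"
  then obtain t where t01: "\<forall>k. 0 \<le> t k \<and> t k \<le> 1" and z: "z = (\<Sum>k\<in>UNIV. t k *\<^sub>R hat_e k)"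
    by blast
  have diff: "z $ i - z $ j = t i - t j" for i j
    by (simp only: z sum_scaleR_hat_e_component)
  have "z $ i - z $ j \<le> 1" for i j
    using diff[of i j] t01[rule_format, of i] t01[rule_format, of j] by linarith
  moreover have "z \<in> H0"
    unfolding z by (rule sum_scaleR_hat_e_in_H0)
  ultimately show "z \<in> {z \<in> H0. \<forall>i j. z $ i - z $ j \<le> 1}"
    by blast
next
  fix z :: "real^'n"
  assume "z \<in> {z \<in> H0. \<forall>i j. z $ i - z $ j \<le> 1}"
  then have zH: "(\<Sum>k\<in>UNIV. z $ k) = 0" and osc: "\<And>i j. z $ i - z $ j \<le> 1"
    by (auto simp: H0_def)
  define m where "m = Min (range (\<lambda>k. z $ k))"
  have m_le: "m \<le> z $ k" for k
    unfolding m_def by (rule Min_le) auto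
  have "m \<in> range (\<lambda>k. z $ k)"
    unfolding m_def by (rule Min_in) auto
  then obtain j where mj: "m = z $ j"
    by blast
  define t where "t k = z $ k - m" for k
  have "(\<Sum>k\<in>UNIV. t k *\<^sub>R hat_e k) = z"
  proof (subst vec_eq_iff, intro allI)
    fix i
    have "(\<Sum>k\<in>UNIV. t k) = - real CARD('n) * m"
      by (simp add: t_def sum_subtractf zH)
    then show "(\<Sum>k\<in>UNIV. t k *\<^sub>R hat_e k) $ i = z $ i"
      by (simp only: sum_scaleR_hat_e_component) (simp add: t_def)
  qed
  moreover have "\<forall>k. 0 \<le> t k \<and> t k \<le> 1"
    using m_le osc mj by (auto simp: t_def)
  ultimately show "z \<in> {\<Sum>k\<in>UNIV. t k *\<^sub>R hat_e k | t. \<forall>k. 0 \<le> t k \<and> t k \<le> 1}"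
    by blast
qed

lemma polar_H0_convex_hull: "polar_H0 (convex hull S) = polar_H0 S"
proof
  show "polar_H0 (convex hull S) \<subseteq> polar_H0 S"
    unfolding polar_H0_def by (auto dest: hull_subset[THEN subsetD])
  have "convex hull S \<subseteq> {x. y \<bullet> x \<le> 1}" if "y \<in> polar_H0 S" for y
    using that by (intro hull_minimal) (auto simp: polar_H0_def convex_halfspace_le)
  then show "polar_H0 S \<subseteq> polar_H0 (convex hull S)"
    unfolding polar_H0_def by blast
qed

lemma polar_H0_root_polytope_hat_e:
  assumes "linear A" and adj: "\<forall>x\<in>H0. \<forall>y\<in>H0. Aadj y \<bullet> x = y \<bullet> A x"
  shows "polar_H0 (root_polytope (\<lambda>i. A (hat_e i)))
         = {y \<in> H0. \<forall>i j. Aadj y $ i - Aadj y $ j \<le> 1}"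
proof -
  have "y \<bullet> (A (hat_e i) - A (hat_e j)) = Aadj y $ i - Aadj y $ j" if "y \<in> H0" for y i j
  proof -
    have "y \<bullet> (A (hat_e i) - A (hat_e j)) = Aadj y \<bullet> (hat_e i - hat_e j)"
      using adj hat_e_diff_in_H0[of i j] that by (simp add: linear_diff[OF \<open>linear A\<close>])
    then show ?thesis
      by (simp only: inner_hat_e_diff)
  qed
  then show ?thesis
    unfolding root_polytope_def polar_H0_convex_hull
    by (auto simp: polar_H0_def) (metis diff_self zero_le_one)
qed

lemma zono_eq_if_barycenter_0:
  assumes "barycenter a = 0"
  shows "zono a = {\<Sum>i\<in>UNIV. t i *\<^sub>R a i | t. \<forall>i. 0 \<le> t i \<and> t i \<le> 1}"
  using assms by (simp add: zono_def)

lemma zono_linear_image_hat_e: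
  assumes "linear B"
  shows "zono (\<lambda>i. B (hat_e i))
         = B ` {\<Sum>k\<in>UNIV. t k *\<^sub>R hat_e k | t. \<forall>k. 0 \<le> t k \<and> t k \<le> 1}"
proof -
  have "barycenter (\<lambda>i. B (hat_e i)) = 0"
    by (simp add: barycenter_def linear_sum[OF assms, symmetric] sum_hat_e_eq_0 linear_0[OF assms])
  then show ?thesis
    by (auto simp: zono_eq_if_barycenter_0 linear_sum[OF assms] linear_cmul[OF assms]
             intro!: image_eqI)
qed

lemma preimage_eq_image_of_inverse_on:
  assumes "Z \<subseteq> H" and "B ` H \<subseteq> H" and "\<forall>y\<in>H. Aadj (B y) = y \<and> B (Aadj y) = y"
  shows "{y \<in> H. Aadj y \<in> Z} = B ` Z"
  using assms by (force simp: image_iff)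

theorem mainTheorem10:
  fixes A Aadj B :: "real^'n \<Rightarrow> real^'n"
  assumes n2: "CARD('n) \<ge> 2"
    and linA: "linear A" and A_H0: "A ` H0 \<subseteq> H0" and A_inj: "inj_on A H0"
    and linAadj: "linear Aadj" and Aadj_H0: "Aadj ` H0 \<subseteq> H0"
    and adj: "\<forall>x\<in>H0. \<forall>y\<in>H0. Aadj y \<bullet> x = y \<bullet> A x"
    and linB: "linear B" and B_H0: "B ` H0 \<subseteq> H0"
    and B_inv: "\<forall>y\<in>H0. Aadj (B y) = y \<and> B (Aadj y) = y"
  shows "polar_H0 (root_polytope (\<lambda>i. A (hat_e i))) = zono (\<lambda>i. B (hat_e i))"
proof -
  let ?Z = "{z \<in> H0. \<forall>i j. z $ i - z $ j \<le> (1::real)}"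
  have "polar_H0 (root_polytope (\<lambda>i. A (hat_e i))) = {y \<in> H0. Aadj y \<in> ?Z}"
    using polar_H0_root_polytope_hat_e[OF linA adj] Aadj_H0 by auto
  also have "\<dots> = B ` ?Z"
    using preimage_eq_image_of_inverse_on[of ?Z H0 B Aadj] B_H0 B_inv by blast
  also have "\<dots> = zono (\<lambda>i. B (hat_e i))"
    by (simp add: zono_linear_image_hat_e[OF linB] hat_e_cube_eq)
  finally show ?thesis .
qed

end
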